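(* For every integer $i > 0$, the limits defining $d_0(W,\sigma^iW)$ and $d(W,\sigma^iW)$ exist, and $$d_0(W,\sigma^i W) > \frac16 \qquad\text{and}\qquad d(W,\sigma^i W) > \frac29.$$
   Context: Words are finite strings over $\{0,1\}$; $\alpha(i)$ is the $i$-th letter and $|\alpha|$ the length. Define $W_0 = 0$, $W_{m+1} = W_m W_m 1 W_m$, and let $W=W(0)W(1)\cdots$ (indexed from $0$) be the unique infinite word having every $W_m$ as an initial segment. For words $\alpha,\beta$ of equal length, $d(\alpha,\beta) = |\{i:\alpha(i)\ne\beta(i)\}|/|\alpha|$, and (if $\alpha$ contains a $0$) $d_0(\alpha,\beta) = |\{i : \alpha(i)=0,\ \beta(i)=1\}|/|\{i:\alpha(i)=0\}|$. For $i>0$ and $n\ge0$ let $\alpha_n$ be the subword of $W$ of length $|W_n|$ starting at position $i$, and set $d(W,\sigma^iW) = \lim_{n\to\infty} d(W_n,\alpha_n)$ and $d_0(W,\sigma^iW) = \lim_{n\to\infty} d_0(W_n,\alpha_n)$. *)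

theory Defs
  imports Complex_Main
begin

text \<open>Words are lists over {0,1} (represented as natural numbers 0 and 1).\<close>

fun Wfin :: "nat \<Rightarrow> nat list" where
  "Wfin 0 = [0]"
| "Wfin (Suc m) = Wfin m @ Wfin m @ [1] @ Wfin m"

definition Winf :: "nat \<Rightarrow> nat" where
  "Winf = (THE w. \<forall>m. \<forall>k<length (Wfin m). w k = Wfin m ! k)"

definition dist_w :: "nat list \<Rightarrow> nat list \<Rightarrow> real" where
  "dist_w a b = real (card {k. k < length a \<and> a ! k \<noteq> b ! k}) / real (length a)"

definition dist0_w :: "nat list \<Rightarrow> nat list \<Rightarrow> real" where
  "dist0_w a b = real (card {k. k < length a \<and> a ! k = 0 \<and> b ! k = 1})
                 / real (card {k. k < length a \<and> a ! k = 0})"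

definition shifted_sub :: "nat \<Rightarrow> nat \<Rightarrow> nat list" where
  "shifted_sub i n = map Winf [i..<i + length (Wfin n)]"

end

theory Submission
  imports Defs
begin

text \<open>
  Let X_n(b) count the positions t < |W_n| with W(t) = 0 and W(b + t) = 1, so that
  d_0(W_n, alpha_n) = X_n(i) / 3^n. Since W_{n+1} = W_n W_n 1 W_n, with L = |W_n| we have
  X_{n+1}(b) = X_n(b) + X_n(b + L) + X_n(b + 2L + 1); and since W begins with W_{n+2},
  every window of length L at a shift at most 8L + 4 already occurs at a shift at most
  2L + 1. Along this recursion an induction on n gives 6 X_n(c) >= 3^n + 3 for all
  0 < c <= 2L with c ~= L.

  For fixed i and n >= i the pair (X_n(i), X_n(L + i)) evolves by (x, y) |-> (2x + y, x + 2y),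
  so X_n(i) / 3^n converges to (x + y) / (2 * 3^i) for the pair at n = i, which exceeds 1/6
  by the bound. Finally alpha_n is a rotation of W_n, so both have equally many 1s and the
  mismatches of type 0/1 and 1/0 are equinumerous: d = 2 X_n(i) / |W_n|, which tends to
  4/3 times the limit of d_0.
\<close>

section \<open>The word W\<close>

definition wlen :: "nat \<Rightarrow> nat" where
  "wlen n = length (Wfin n)"

lemma wlen_0 [simp]: "wlen 0 = 1"
  and wlen_Suc [simp]: "wlen (Suc n) = 3 * wlen n + 1"
  by (simp_all add: wlen_def)

lemma wlen_eq_power: "2 * wlen n + 1 = 3 ^ Suc n"
  by (induction n) simp_all

lemma less_wlen: "n < wlen n"
  by (induction n) simp_all

lemma wlen_mono: "m \<le> n \<Longrightarrow> wlen m \<le> wlen n"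
  by (induction n) (auto simp: le_Suc_eq)

lemma Wfin_prefix: "m \<le> n \<Longrightarrow> k < wlen m \<Longrightarrow> Wfin n ! k = Wfin m ! k"
proof (induction n)
  case (Suc n)
  show ?case
  proof (cases "m = Suc n")
    case False
    with Suc.prems have "m \<le> n" "k < length (Wfin n)"
      using wlen_mono[of m n] by (simp_all add: wlen_def)
    with Suc show ?thesis by (simp add: nth_append)
  qed simp
qed simp

lemma Winf_eq_nth_Wfin: "k < wlen n \<Longrightarrow> Winf k = Wfin n ! k"
proof -
  have agree: "Wfin m ! k = Wfin n ! k" if "k < wlen m" "k < wlen n" for m n k
    using Wfin_prefix[of m "max m n" k] Wfin_prefix[of n "max m n" k] that by simp
  have "Winf = (\<lambda>k. Wfin k ! k)"
    unfolding Winf_def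
  proof (rule the_equality)
    show "\<forall>m. \<forall>k<length (Wfin m). Wfin k ! k = Wfin m ! k"
      using agree less_wlen by (metis wlen_def)
  next
    fix w assume "\<forall>m. \<forall>k<length (Wfin m). w k = Wfin m ! k"
    then show "w = (\<lambda>k. Wfin k ! k)"
      using less_wlen by (auto simp: wlen_def)
  qed
  then show "k < wlen n \<Longrightarrow> Winf k = Wfin n ! k"
    using agree less_wlen by metis
qed

lemma Wfin_eq_map_Winf: "Wfin n = map Winf [0..<wlen n]"
  by (rule nth_equalityI) (simp_all add: Winf_eq_nth_Wfin wlen_def)

lemma set_Wfin: "set (Wfin n) \<subseteq> {0, 1}"
  by (induction n) auto

lemma Winf_le_1: "Winf k \<le> 1"
proof -
  have "Wfin k ! k \<in> set (Wfin k)"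
    using less_wlen[of k] by (simp add: wlen_def)
  then show ?thesis
    using set_Wfin[of k] Winf_eq_nth_Wfin[OF less_wlen[of k]] by auto
qed

lemma Winf_second_block: "j < wlen n \<Longrightarrow> Winf (wlen n + j) = Winf j"
  by (simp add: Winf_eq_nth_Wfin[of _ "Suc n"] Winf_eq_nth_Wfin[of j n] nth_append wlen_def)

lemma Winf_separator: "Winf (2 * wlen n) = 1"
  by (simp add: Winf_eq_nth_Wfin[of _ "Suc n"] nth_append wlen_def)

lemma Winf_third_block: "j < wlen n \<Longrightarrow> Winf (2 * wlen n + 1 + j) = Winf j"
  by (simp add: Winf_eq_nth_Wfin[of _ "Suc n"] Winf_eq_nth_Wfin[of j n] nth_append wlen_def)

section \<open>Positions where a 0 of W meets a 1 of the shifted word\<close>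

definition count01 :: "nat \<Rightarrow> nat \<Rightarrow> nat" where
  "count01 n b = length (filter (\<lambda>(x, y). x = 0 \<and> y = 1) (zip (Wfin n) (shifted_sub b n)))"

lemma length_shifted_sub [simp]: "length (shifted_sub b n) = wlen n"
  by (simp add: shifted_sub_def wlen_def)

lemma shifted_sub_Suc:
  "shifted_sub b (Suc n) = shifted_sub b n @ shifted_sub (b + wlen n) n
     @ [Winf (b + 2 * wlen n)] @ shifted_sub (b + 2 * wlen n + 1) n"
proof -
  let ?L = "wlen n"
  have split: "[i..<i + (k + m)] = [i..<i + k] @ [i + k..<i + k + m]" for i k m
    using upt_add_eq_append[of i "i + k" m] by (simp add: add.assoc)
  have "wlen (Suc n) = ?L + (?L + (1 + ?L))"
    by simp
  then have "[b..<b + wlen (Suc n)] = [b..<b + (?L + (?L + (1 + ?L)))]"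
    by (simp only:)
  also have "\<dots> = [b..<b + ?L] @ [b + ?L..<b + ?L + ?L] @ [b + ?L + ?L..<b + ?L + ?L + 1]
      @ [b + ?L + ?L + 1..<b + ?L + ?L + 1 + ?L]"
    by (simp only: split append.assoc)
  finally show ?thesis
    unfolding shifted_sub_def mult_2 add.assoc[symmetric] by (simp add: wlen_def)
qed

lemma count01_Suc:
  "count01 (Suc n) b = count01 n b + count01 n (b + wlen n) + count01 n (b + 2 * wlen n + 1)"
  by (simp add: count01_def shifted_sub_Suc wlen_def)

lemma count01_cong:
  assumes "\<And>t. t < wlen n \<Longrightarrow> Winf (b + t) = Winf (c + t)"
  shows "count01 n b = count01 n c"
proof -
  have "shifted_sub b n = shifted_sub c n"
    by (rule nth_equalityI) (simp_all add: shifted_sub_def assms wlen_def)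
  then show ?thesis
    by (simp add: count01_def)
qed

lemma count01_shift:
  assumes "\<And>t. t < m \<Longrightarrow> Winf (a + t) = Winf (a' + t)" and "a \<le> c" and "c + wlen n \<le> a + m"
  shows "count01 n c = count01 n (c - a + a')"
proof (rule count01_cong)
  fix t assume "t < wlen n"
  define u where "u = c - a + t"
  from \<open>t < wlen n\<close> assms(2,3) have "c + t = a + u" "c - a + a' + t = a' + u" "u < m"
    by (simp_all add: u_def)
  with assms(1)[of u] show "Winf (c + t) = Winf (c - a + a' + t)"
    by (simp only:)
qed

lemma Winf_2wlen_Suc_add: "t < 2 * wlen n \<Longrightarrow> Winf (2 * wlen n + 1 + t) = Winf t"
proof (cases "t < wlen n")
  case False
  assume "t < 2 * wlen n"
  define s where "s = t - wlen n"
  with False \<open>t < 2 * wlen n\<close> have s: "t = wlen n + s" "s < wlen n"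
    by simp_all
  then have "Winf (2 * wlen n + 1 + t) = Winf (wlen (Suc n) + s)"
    by simp
  also have "\<dots> = Winf s"
    using s by (intro Winf_second_block) simp
  also have "\<dots> = Winf t"
    using s Winf_second_block[of s n] by simp
  finally show ?thesis .
qed (rule Winf_third_block)

lemma Winf_5wlen_2_add: "t \<le> 2 * wlen n \<Longrightarrow> Winf (5 * wlen n + 2 + t) = Winf (wlen n + t)"
proof (cases t "wlen n" rule: linorder_cases)
  case less
  then have "Winf (5 * wlen n + 2 + t) = Winf (wlen (Suc n) + (2 * wlen n + 1 + t))"
    by simp
  also have "\<dots> = Winf (2 * wlen n + 1 + t)"
    using less by (intro Winf_second_block) simp
  finally show ?thesis
    using less Winf_third_block[of t n] Winf_second_block[of t n] by simp
next
  case equal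
  then show ?thesis
    using Winf_separator[of n] Winf_separator[of "Suc n"] by (simp add: mult_2)
next
  case greater
  assume "t \<le> 2 * wlen n"
  define s where "s = t - wlen n - 1"
  with greater \<open>t \<le> 2 * wlen n\<close> have s: "t = wlen n + 1 + s" "s < wlen n"
    by simp_all
  then have "Winf (5 * wlen n + 2 + t) = Winf (2 * wlen (Suc n) + 1 + s)"
    by simp
  also have "\<dots> = Winf s"
    using s by (intro Winf_third_block) simp
  finally show ?thesis
    using s Winf_third_block[of s n] by (simp add: mult_2 add.assoc)
qed

text \<open>
  W begins with W_{n+2} = V V 1 V V V 1 V 1 V V 1 V where V = W_n; the window of length |V|
  at a shift c <= 8|V| + 4 coincides with the one at shift_rep n c <= 2|V| + 1.
\<close>

definition shift_rep :: "nat \<Rightarrow> nat \<Rightarrow> nat" where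
  "shift_rep n c =
     (if c \<le> 2 * wlen n then c
      else if c \<le> 3 * wlen n then c - (2 * wlen n + 1)
      else if c \<le> 5 * wlen n + 2 then c - (3 * wlen n + 1)
      else if c \<le> 6 * wlen n + 3 then c - (4 * wlen n + 2)
      else c - (6 * wlen n + 3))"

lemma count01_shift_rep:
  assumes "c \<le> 8 * wlen n + 4"
  shows "count01 n c = count01 n (shift_rep n c)"
proof -
  let ?L = "wlen n"
  have "count01 n c = count01 n (c - (2 * ?L + 1) + 0)" if "2 * ?L < c" "c \<le> 3 * ?L"
    using that by (intro count01_shift[where m = "2 * ?L"])
      (use Winf_2wlen_Suc_add[of _ n] in simp_all)
  moreover have "count01 n c = count01 n (c - wlen (Suc n) + 0)" if "3 * ?L < c" "c \<le> 5 * ?L + 2"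
    using that by (intro count01_shift[where m = "wlen (Suc n)"])
      (use Winf_second_block[of _ "Suc n"] in simp_all)
  moreover have "count01 n c = count01 n (c - (5 * ?L + 2) + ?L)" if "5 * ?L + 2 < c" "c \<le> 6 * ?L + 3"
    using that by (intro count01_shift[where m = "2 * ?L + 1"])
      (use Winf_5wlen_2_add[of _ n] in simp_all)
  moreover have "count01 n c = count01 n (c - (6 * ?L + 3) + 0)" if "6 * ?L + 3 < c"
    using that assms by (intro count01_shift[where m = "wlen (Suc n)"])
      (use Winf_third_block[of _ "Suc n"] in \<open>simp_all add: numeral_3_eq_3\<close>)
  ultimately show ?thesis
    unfolding shift_rep_def by (simp add: not_le)
qed

lemma count01_Suc_shift_rep:
  assumes "c \<le> 6 * wlen n + 3"
  shows "count01 (Suc n) c = count01 n (shift_rep n c) + count01 n (shift_rep n (c + wlen n))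
    + count01 n (shift_rep n (c + 2 * wlen n + 1))"
  using assms count01_shift_rep[of c n] count01_shift_rep[of "c + wlen n" n]
    count01_shift_rep[of "c + 2 * wlen n + 1" n]
  by (simp add: count01_Suc)

lemma count01_at_0: "count01 n 0 = 0"
proof -
  have "shifted_sub 0 n = Wfin n"
    by (simp add: shifted_sub_def Wfin_eq_map_Winf[of n])
  then show ?thesis
    by (auto simp: count01_def filter_empty_conv zip_same)
qed

lemma count01_at_wlen: "count01 n (wlen n) = 0" "count01 n (2 * wlen n + 1) = 0"
proof -
  have "count01 n (wlen n) = count01 n 0"
    by (rule count01_cong) (simp add: Winf_second_block)
  moreover have "count01 n (2 * wlen n + 1) = count01 n 0"
    by (rule count01_cong) (use Winf_third_block[of _ n] in simp)
  ultimately show "count01 n (wlen n) = 0" "count01 n (2 * wlen n + 1) = 0"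
    by (simp_all add: count01_at_0)
qed

text \<open>
  Stated with a premise rather than as equations so that the simplifier also applies it to
  shifts that equal one of these only by arithmetic, e.g. to 1 = wlen 0.
\<close>

lemma count01_eq_0: "c = 0 \<or> c = wlen n \<or> c = 2 * wlen n + 1 \<Longrightarrow> count01 n c = 0"
  using count01_at_0 count01_at_wlen by auto

section \<open>The lower bound\<close>

text \<open>
  The bound alone does not propagate (e.g. X_{n+1}(|W_n|) = X_n(2|W_n|)), so the exact values
  at four shifts are carried along in the induction.
\<close>

definition count01_profile :: "nat \<Rightarrow> bool" where
  "count01_profile n \<longleftrightarrow>
     2 * count01 n 1 + 1 = 3 ^ n \<and> 2 * count01 n (wlen n - 1) + 1 = 3 ^ n \<and>
     2 * count01 n (wlen n + 1) = 3 ^ n + 1 \<and> 2 * count01 n (2 * wlen n) = 3 ^ n + 1 \<and>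
     (\<forall>c. 0 < c \<and> c \<le> 2 * wlen n \<and> c \<noteq> wlen n \<longrightarrow> 3 ^ n + 3 \<le> 6 * count01 n c)"

lemma count01_profile_0: "count01_profile 0"
proof -
  have W: "Winf 1 = 0" "Winf 2 = 1"
    using Winf_eq_nth_Wfin[of 1 1] Winf_eq_nth_Wfin[of 2 1] by simp_all
  have "count01 0 c = (if Winf c = 1 then 1 else 0)" for c
    by (simp add: count01_def shifted_sub_def)
  with W have "count01 0 1 = 0" "count01 0 2 = 1"
    by simp_all
  then show ?thesis
    by (auto simp: count01_profile_def count01_at_0 le_Suc_eq numeral_2_eq_2)
qed

lemma count01_profile_Suc_exact:
  assumes "count01_profile n"
  shows "2 * count01 (Suc n) 1 + 1 = 3 ^ Suc n"
    "2 * count01 (Suc n) (wlen (Suc n) - 1) + 1 = 3 ^ Suc n"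
    "2 * count01 (Suc n) (wlen (Suc n) + 1) = 3 ^ Suc n + 1"
    "2 * count01 (Suc n) (2 * wlen (Suc n)) = 3 ^ Suc n + 1"
proof -
  let ?L = "wlen n" and ?X = "count01 n"
  have L: "1 \<le> ?L"
    using less_wlen[of n] by simp
  note exact = assms[unfolded count01_profile_def]
  note rep = count01_Suc_shift_rep shift_rep_def count01_eq_0
  have "count01 (Suc n) 1 = ?X 1 + ?X (?L + 1) + ?X 1"
    using L by (simp add: rep)
  then show "2 * count01 (Suc n) 1 + 1 = 3 ^ Suc n"
    using exact by simp
  have "count01 (Suc n) (wlen (Suc n) - 1) = ?X (?L - 1) + ?X (?L - 1) + ?X (2 * ?L)"
    using L by (simp add: rep)
  then show "2 * count01 (Suc n) (wlen (Suc n) - 1) + 1 = 3 ^ Suc n"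
    using exact by simp
  have "count01 (Suc n) (wlen (Suc n) + 1) = ?X 1 + ?X (?L + 1) + ?X (?L + 1)"
    using L by (simp add: rep)
  then show "2 * count01 (Suc n) (wlen (Suc n) + 1) = 3 ^ Suc n + 1"
    using exact by simp
  have "count01 (Suc n) (2 * wlen (Suc n)) = ?X (2 * ?L) + ?X (?L - 1) + ?X (2 * ?L)"
    using L by (simp add: rep)
  then show "2 * count01 (Suc n) (2 * wlen (Suc n)) = 3 ^ Suc n + 1"
    using exact by simp
qed

lemma count01_bound_Suc_below:
  assumes "count01_profile n" and "0 < c" "c < wlen (Suc n)"
  shows "3 ^ Suc n + 3 \<le> 6 * count01 (Suc n) c"
proof -
  let ?L = "wlen n" and ?X = "count01 n"
  note exact = assms(1)[unfolded count01_profile_def]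
  have bound: "3 ^ n + 3 \<le> 6 * ?X a" if "0 < a" "a \<le> 2 * ?L" "a \<noteq> ?L" for a
    using that exact by blast
  note rep = count01_Suc_shift_rep shift_rep_def count01_eq_0 mult_2
  consider "c < ?L" | "c = ?L" | "c = ?L + 1" | "?L + 2 \<le> c" "c < 2 * ?L" | "c = 2 * ?L"
    | "c = 2 * ?L + 1" | "2 * ?L + 2 \<le> c" "c \<le> 3 * ?L"
    using assms(3) wlen_Suc[of n] by atomize_elim arith
  then show ?thesis
  proof cases
    case 1
    then have "count01 (Suc n) c = ?X c + ?X (c + ?L) + ?X c"
      by (simp add: rep)
    moreover have "3 ^ n + 3 \<le> 6 * ?X c" "3 ^ n + 3 \<le> 6 * ?X (c + ?L)"
      using 1 assms(2) by (auto intro!: bound)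
    ultimately show ?thesis by simp
  next
    case 2
    then have "count01 (Suc n) c = ?X (2 * ?L)"
      by (simp add: rep)
    with exact show ?thesis by simp
  next
    case 3
    then have "count01 (Suc n) c = ?X (?L + 1) + ?X 1"
      by (simp add: rep)
    with exact show ?thesis by simp
  next
    case 4
    then have "count01 (Suc n) c = ?X c + ?X (c - ?L - 1) + ?X (c - ?L)"
      by (simp add: rep)
    moreover have "3 ^ n + 3 \<le> 6 * ?X c" "3 ^ n + 3 \<le> 6 * ?X (c - ?L - 1)"
        "3 ^ n + 3 \<le> 6 * ?X (c - ?L)"
      using 4 by (auto intro!: bound)
    ultimately show ?thesis by simp
  next
    case 5
    then have "count01 (Suc n) c = ?X (2 * ?L) + ?X (?L - 1)"
      by (simp add: rep)
    with exact show ?thesis by simp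
  next
    case 6
    then have "count01 (Suc n) c = ?X (?L + 1)"
      by (simp add: rep)
    with exact show ?thesis by simp
  next
    case 7
    then have "count01 (Suc n) c = 2 * ?X (c - 2 * ?L - 1) + ?X (c - ?L)"
      by (simp add: rep)
    moreover have "3 ^ n + 3 \<le> 6 * ?X (c - 2 * ?L - 1)" "3 ^ n + 3 \<le> 6 * ?X (c - ?L)"
      using 7 by (auto intro!: bound)
    ultimately show ?thesis by simp
  qed
qed

lemma count01_bound_Suc_above:
  assumes "count01_profile n" and "wlen (Suc n) < c" "c \<le> 2 * wlen (Suc n)"
  shows "3 ^ Suc n + 3 \<le> 6 * count01 (Suc n) c"
proof -
  let ?L = "wlen n" and ?X = "count01 n"
  note exact = assms(1)[unfolded count01_profile_def]
  have bound: "3 ^ n + 3 \<le> 6 * ?X a" if "0 < a" "a \<le> 2 * ?L" "a \<noteq> ?L" for a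
    using that exact by blast
  note rep = count01_Suc_shift_rep shift_rep_def count01_eq_0 mult_2
  consider "c \<le> 4 * ?L" | "c = 4 * ?L + 1" | "c = 4 * ?L + 2" | "4 * ?L + 3 \<le> c" "c \<le> 5 * ?L + 1"
    | "c = 5 * ?L + 2" | "c = 5 * ?L + 3" | "5 * ?L + 4 \<le> c"
    by atomize_elim arith
  then show ?thesis
  proof cases
    case 1
    with assms(2) have "count01 (Suc n) c = ?X (c - 3 * ?L - 1) + 2 * ?X (c - 2 * ?L - 1)"
      by (simp add: rep)
    moreover have "3 ^ n + 3 \<le> 6 * ?X (c - 3 * ?L - 1)" "3 ^ n + 3 \<le> 6 * ?X (c - 2 * ?L - 1)"
      using 1 assms(2) by (auto intro!: bound)
    ultimately show ?thesis by simp
  next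
    case 2
    then have "count01 (Suc n) c = 2 * ?X (2 * ?L)"
      by (simp add: rep)
    with exact show ?thesis by simp
  next
    case 3
    then have "count01 (Suc n) c = ?X (?L + 1)"
      by (simp add: rep)
    with exact show ?thesis by simp
  next
    case 4
    then have "count01 (Suc n) c = ?X (c - 3 * ?L - 1) + ?X (c - 3 * ?L - 2) + ?X (c - 4 * ?L - 2)"
      by (simp add: rep)
    moreover have "3 ^ n + 3 \<le> 6 * ?X (c - 3 * ?L - 1)" "3 ^ n + 3 \<le> 6 * ?X (c - 3 * ?L - 2)"
        "3 ^ n + 3 \<le> 6 * ?X (c - 4 * ?L - 2)"
      using 4 by (auto intro!: bound)
    ultimately show ?thesis by simp
  next
    case 5
    then have "count01 (Suc n) c = ?X (2 * ?L)"
      by (simp add: rep)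
    with exact show ?thesis by simp
  next
    case 6
    then have "shift_rep n c = ?L + 1" "shift_rep n (c + ?L) = 2 * ?L + 1" "shift_rep n (c + 2 * ?L + 1) = ?L + 1"
      by (simp_all add: shift_rep_def)
    with 6 have "count01 (Suc n) c = 2 * ?X (?L + 1)"
      using count01_Suc_shift_rep[of c n] count01_eq_0[of "2 * ?L + 1" n] by simp
    with exact show ?thesis by simp
  next
    case 7
    with assms(3) have "shift_rep n c = c - 4 * ?L - 2" "shift_rep n (c + ?L) = c - 5 * ?L - 3"
        "shift_rep n (c + 2 * ?L + 1) = c - 4 * ?L - 2"
      by (simp_all add: shift_rep_def)
    with assms(3) have "count01 (Suc n) c = 2 * ?X (c - 4 * ?L - 2) + ?X (c - 5 * ?L - 3)"
      using count01_Suc_shift_rep[of c n] by simp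
    moreover have "3 ^ n + 3 \<le> 6 * ?X (c - 4 * ?L - 2)" "3 ^ n + 3 \<le> 6 * ?X (c - 5 * ?L - 3)"
      using 7 assms(3) by (auto intro!: bound)
    ultimately show ?thesis by simp
  qed
qed

lemma count01_profile_Suc:
  assumes "count01_profile n"
  shows "count01_profile (Suc n)"
proof -
  have "3 ^ Suc n + 3 \<le> 6 * count01 (Suc n) c"
    if "0 < c" "c \<le> 2 * wlen (Suc n)" "c \<noteq> wlen (Suc n)" for c
  proof (cases "c < wlen (Suc n)")
    case True
    with assms that show ?thesis by (intro count01_bound_Suc_below)
  next
    case False
    with assms that show ?thesis by (intro count01_bound_Suc_above) simp_all
  qed
  with count01_profile_Suc_exact[OF assms] show ?thesis
    unfolding count01_profile_def[of "Suc n"] by blast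
qed

lemma count01_profile: "count01_profile n"
  by (induction n) (simp_all add: count01_profile_0 count01_profile_Suc)

section \<open>The limits\<close>

lemma count01_Suc_same_shift:
  assumes "i \<le> wlen n"
  shows "count01 (Suc n) i = 2 * count01 n i + count01 n (wlen n + i)"
  using assms by (simp add: count01_Suc_shift_rep shift_rep_def count01_eq_0 add.commute)

lemma count01_Suc_next_shift:
  assumes "i \<le> wlen n"
  shows "count01 (Suc n) (wlen (Suc n) + i) = count01 n i + 2 * count01 n (wlen n + i)"
  using assms by (simp add: count01_Suc_shift_rep shift_rep_def count01_eq_0 add.commute)

lemma coupled_recurrence_closed_form:
  fixes x y :: "nat \<Rightarrow> real"
  assumes "\<And>k. x (Suc k) = 2 * x k + y k" and "\<And>k. y (Suc k) = x k + 2 * y k"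
  shows "x k = (3 ^ k * (x 0 + y 0) + (x 0 - y 0)) / 2"
proof -
  have "x k = (3 ^ k * (x 0 + y 0) + (x 0 - y 0)) / 2 \<and> y k = (3 ^ k * (x 0 + y 0) - (x 0 - y 0)) / 2"
    by (induction k) (simp_all add: assms field_simps)
  then show ?thesis ..
qed

lemma coupled_recurrence_tendsto:
  fixes x y :: "nat \<Rightarrow> real"
  assumes "\<And>k. x (Suc k) = 2 * x k + y k" and "\<And>k. y (Suc k) = x k + 2 * y k"
  shows "(\<lambda>k. x k / 3 ^ k) \<longlonglongrightarrow> (x 0 + y 0) / 2"
proof -
  have "x k / 3 ^ k = (x 0 + y 0) / 2 + (x 0 - y 0) / 2 * (1 / 3) ^ k" for k
    by (simp add: coupled_recurrence_closed_form[of x y, OF assms, of k] field_simps power_one_over)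
  moreover have "(\<lambda>k. (x 0 + y 0) / 2 + (x 0 - y 0) / 2 * (1 / 3) ^ k) \<longlonglongrightarrow> (x 0 + y 0) / 2 + (x 0 - y 0) / 2 * 0"
    by (intro tendsto_intros LIMSEQ_realpow_zero) simp_all
  ultimately show ?thesis
    by simp
qed

lemma count01_over_power_tendsto:
  assumes "0 < i"
  obtains l where "(\<lambda>n. real (count01 n i) / 3 ^ n) \<longlonglongrightarrow> l" and "1 / 6 < l"
proof -
  define x where "x k = real (count01 (k + i) i)" for k
  define y where "y k = real (count01 (k + i) (wlen (k + i) + i))" for k
  have i_le: "i \<le> wlen (k + i)" for k
    using less_wlen[of i] wlen_mono[of i "k + i"] by simp
  have "(\<lambda>k. x k / 3 ^ k) \<longlonglongrightarrow> (x 0 + y 0) / 2"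
    by (rule coupled_recurrence_tendsto)
      (use count01_Suc_same_shift[OF i_le] count01_Suc_next_shift[OF i_le] in \<open>simp_all add: x_def y_def\<close>)
  then have "(\<lambda>k. x k / 3 ^ k / 3 ^ i) \<longlonglongrightarrow> (x 0 + y 0) / 2 / 3 ^ i"
    by (rule tendsto_divide[OF _ tendsto_const]) simp_all
  then have "(\<lambda>k. real (count01 (k + i) i) / 3 ^ (k + i)) \<longlonglongrightarrow> (x 0 + y 0) / 2 / 3 ^ i"
    by (simp add: x_def power_add)
  then have lim: "(\<lambda>n. real (count01 n i) / 3 ^ n) \<longlonglongrightarrow> (x 0 + y 0) / 2 / 3 ^ i"
    by (rule LIMSEQ_offset)
  have "3 ^ i + 3 \<le> 6 * count01 i i" "3 ^ i + 3 \<le> 6 * count01 i (wlen i + i)"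
    using count01_profile[of i] assms less_wlen[of i] unfolding count01_profile_def by auto
  then have "real (3 ^ i + 3) \<le> real (6 * count01 i i)"
    "real (3 ^ i + 3) \<le> real (6 * count01 i (wlen i + i))"
    by (simp_all only: of_nat_le_iff)
  then have "1 / 6 < (x 0 + y 0) / 2 / 3 ^ i"
    by (simp add: x_def y_def field_simps)
  with lim show ?thesis
    using that by blast
qed

lemma length_filter_zero_Wfin: "length (filter (\<lambda>x. x = 0) (Wfin n)) = 3 ^ n"
  by (induction n) simp_all

lemma length_filter_zip_conv_card:
  assumes "length xs = length ys"
  shows "length (filter (\<lambda>(x, y). P x y) (zip xs ys)) = card {k. k < length xs \<and> P (xs ! k) (ys ! k)}"
  using assms by (auto simp: length_filter_conv_card intro!: arg_cong[where f = card])

lemma card_zero_one_eq_count01: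
  "card {k. k < length (Wfin n) \<and> Wfin n ! k = 0 \<and> shifted_sub i n ! k = 1} = count01 n i"
  unfolding count01_def by (subst length_filter_zip_conv_card) (simp_all add: wlen_def)

lemma dist0_w_eq: "dist0_w (Wfin n) (shifted_sub i n) = real (count01 n i) / 3 ^ n"
  unfolding dist0_w_def card_zero_one_eq_count01
  by (simp add: length_filter_zero_Wfin[of n, unfolded length_filter_conv_card])

lemma mismatches_zero_one_lists:
  fixes xs ys :: "nat list"
  assumes "length xs = length ys" and "set xs \<subseteq> {0, 1}" and "set ys \<subseteq> {0, 1}"
  shows "length (filter (\<lambda>(x, y). x \<noteq> y) (zip xs ys)) + sum_list ys
    = 2 * length (filter (\<lambda>(x, y). x = 0 \<and> y = 1) (zip xs ys)) + sum_list xs"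
  using assms by (induction xs ys rule: list_induct2) auto

lemma shifted_sub_eq_drop_take:
  assumes "i \<le> wlen n"
  shows "shifted_sub i n = drop i (Wfin n) @ take i (Wfin n)"
proof -
  have "[i..<i + wlen n] = [i..<wlen n] @ [wlen n..<wlen n + i]"
    using assms upt_add_eq_append[of i "wlen n" i] by (simp add: add.commute)
  moreover have "map Winf [wlen n..<wlen n + i] = map Winf [0..<i]"
    using assms by (intro nth_equalityI) (simp_all add: Winf_second_block)
  ultimately show ?thesis
    using assms by (simp add: shifted_sub_def Wfin_eq_map_Winf[of n] drop_map take_map)
qed

lemma dist_w_eq:
  assumes "i \<le> wlen n"
  shows "dist_w (Wfin n) (shifted_sub i n) = 2 * real (count01 n i) / real (wlen n)"
proof -
  have "sum_list (shifted_sub i n) = sum_list (Wfin n)"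
    using shifted_sub_eq_drop_take[OF assms] append_take_drop_id[of i "Wfin n"]
    by (metis add.commute sum_list_append)
  moreover have "set (shifted_sub i n) \<subseteq> {0, 1}"
    using Winf_le_1 by (force simp: shifted_sub_def le_Suc_eq)
  ultimately have "length (filter (\<lambda>(x, y). x \<noteq> y) (zip (Wfin n) (shifted_sub i n))) = 2 * count01 n i"
    using mismatches_zero_one_lists[of "Wfin n" "shifted_sub i n"] set_Wfin[of n]
    by (simp add: count01_def wlen_def)
  then show ?thesis
    unfolding dist_w_def by (subst (asm) length_filter_zip_conv_card) (simp_all add: wlen_def)
qed

lemma power_over_wlen_tendsto: "(\<lambda>n. 3 ^ n / real (wlen n)) \<longlonglongrightarrow> 2 / 3"
proof -
  have "3 ^ n / real (wlen n) = 2 / (3 - (1 / 3) ^ n)" for n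
  proof -
    have "2 * real (wlen n) + 1 = 3 * 3 ^ n"
      using arg_cong[OF wlen_eq_power[of n], of real] by simp
    then have "3 - (1 / 3) ^ n = 2 * real (wlen n) / 3 ^ n"
      by (simp add: field_simps power_one_over)
    then show ?thesis
      using less_wlen[of n] by simp
  qed
  moreover have "(\<lambda>n. 2 / (3 - (1 / 3) ^ n)) \<longlonglongrightarrow> 2 / (3 - 0 :: real)"
    by (intro tendsto_intros LIMSEQ_realpow_zero) simp_all
  ultimately show ?thesis
    by simp
qed

theorem proposition1:
  fixes i :: nat
  assumes "i > 0"
  shows "\<exists>L0 L. (\<lambda>n. dist0_w (Wfin n) (shifted_sub i n)) \<longlonglongrightarrow> L0
              \<and> (\<lambda>n. dist_w (Wfin n) (shifted_sub i n)) \<longlonglongrightarrow> L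
              \<and> L0 > 1/6 \<and> L > 2/9"
proof -
  obtain l where lim: "(\<lambda>n. real (count01 n i) / 3 ^ n) \<longlonglongrightarrow> l" and "1 / 6 < l"
    using count01_over_power_tendsto[OF assms] .
  have "\<forall>\<^sub>F n in sequentially. 2 * (real (count01 n i) / 3 ^ n) * (3 ^ n / real (wlen n))
      = dist_w (Wfin n) (shifted_sub i n)"
    using eventually_ge_at_top[of i]
  proof eventually_elim
    case (elim n)
    then show ?case
      using less_wlen[of n] by (simp add: dist_w_eq)
  qed
  moreover have "(\<lambda>n. 2 * (real (count01 n i) / 3 ^ n) * (3 ^ n / real (wlen n))) \<longlonglongrightarrow> 2 * l * (2 / 3)"
    by (intro tendsto_intros lim power_over_wlen_tendsto)
  ultimately have "(\<lambda>n. dist_w (Wfin n) (shifted_sub i n)) \<longlonglongrightarrow> 2 * l * (2 / 3)"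
    by (rule Lim_transform_eventually[rotated])
  moreover have "(\<lambda>n. dist0_w (Wfin n) (shifted_sub i n)) \<longlonglongrightarrow> l"
    using lim by (simp add: dist0_w_eq)
  ultimately show ?thesis
    using \<open>1 / 6 < l\<close> by (intro exI[of _ l] exI[of _ "2 * l * (2 / 3)"]) simp
qed

end
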